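(* Let $a_1,\dots,a_n\in\mathbb{R}^d$, $f_1,\dots,f_n:\mathbb{R}\to[0,\infty)$ twice differentiable, $\gamma:\mathbb{R}^d\to[0,\infty)$, $F(x)=\frac1n\sum_{i=1}^n f_i(a_i^Tx)+\gamma(x)$, $\lambda>0$, $y\in\mathbb{R}^d$, $r>0$, and $F_{\lambda,y}(x)=F(x)+\lambda\|x-y\|_2^2$. Let $\tilde f_i$ and $\tilde F_{\lambda,y}$ be the quadratic approximations defined in the context. Let $B(r,y)=\{x:\|x-y\|_2\le r\}$ and suppose that there are constants $C_1,\dots,C_n\ge 0$ such that for all $x\in B(r,y)$: (i) $f_i(a_i^Tx)-\tilde f_i(x)\le \frac{C_i}{6}\|x-y\|_2^3$ for every $i$; (ii) $F_{\lambda,y}(x)\ge \tilde F_{\lambda,y}(x)$; (iii) $\tilde F_{\lambda,y}(x)>0$. Let $\alpha=\min_{x\in B(r,y)}F_{\lambda,y}(x)$ and assume $\alpha>0$. Then for every $i\in[n]$, $$\sup_{x\in B(r,y)}\frac{\frac1n f_i(a_i^Tx)}{F_{\lambda,y}(x)}\;\le\;\sup_{x\in B(r,y)}\frac{\frac1n \tilde f_i(x)}{\tilde F_{\lambda,y}(x)}+\min\Big(\frac{C_i r}{6n\lambda},\ \frac{C_i r^3}{6n\alpha}\Big).$$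
   Context: Quadratic approximation around $y$: $\tilde f_i(x)=f_i(a_i^Ty)+a_i^T(x-y)f_i'(a_i^Ty)+\tfrac12(a_i^T(x-y))^2f_i''(a_i^Ty)$ and $\tilde F_{\lambda,y}(x)=\frac1n\sum_{i=1}^n\tilde f_i(x)+\gamma(x)+\lambda\|x-y\|_2^2$. The two suprema are the local sensitivities of $a_i$ with respect to $F_{\lambda,y}$ and $\tilde F_{\lambda,y}$ on $B(r,y)$. *)

theory Defs
  imports "HOL-Analysis.Analysis"
begin

definition objF :: "nat \<Rightarrow> (nat \<Rightarrow> real^'d) \<Rightarrow> (nat \<Rightarrow> real \<Rightarrow> real) \<Rightarrow> (real^'d \<Rightarrow> real) \<Rightarrow> real^'d \<Rightarrow> real" where
  "objF n a f \<gamma> x = (1 / real n) * (\<Sum>i=1..n. f i (a i \<bullet> x)) + \<gamma> x"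

definition Flam :: "nat \<Rightarrow> (nat \<Rightarrow> real^'d) \<Rightarrow> (nat \<Rightarrow> real \<Rightarrow> real) \<Rightarrow> (real^'d \<Rightarrow> real) \<Rightarrow> real \<Rightarrow> real^'d \<Rightarrow> real^'d \<Rightarrow> real" where
  "Flam n a f \<gamma> lam y x = objF n a f \<gamma> x + lam * (norm (x - y))\<^sup>2"

text \<open>Quadratic approximation of f_i(a_i^T x) around y; f1, f2 are the first and second derivatives.\<close>
definition ftilde :: "(nat \<Rightarrow> real^'d) \<Rightarrow> (nat \<Rightarrow> real \<Rightarrow> real) \<Rightarrow> (nat \<Rightarrow> real \<Rightarrow> real) \<Rightarrow> (nat \<Rightarrow> real \<Rightarrow> real) \<Rightarrow> real^'d \<Rightarrow> nat \<Rightarrow> real^'d \<Rightarrow> real" where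
  "ftilde a f f1 f2 y i x =
     f i (a i \<bullet> y) + (a i \<bullet> (x - y)) * f1 i (a i \<bullet> y) + (1/2) * (a i \<bullet> (x - y))\<^sup>2 * f2 i (a i \<bullet> y)"

definition Ftilde :: "nat \<Rightarrow> (nat \<Rightarrow> real^'d) \<Rightarrow> (nat \<Rightarrow> real \<Rightarrow> real) \<Rightarrow> (nat \<Rightarrow> real \<Rightarrow> real) \<Rightarrow> (nat \<Rightarrow> real \<Rightarrow> real) \<Rightarrow> (real^'d \<Rightarrow> real) \<Rightarrow> real \<Rightarrow> real^'d \<Rightarrow> real^'d \<Rightarrow> real" where
  "Ftilde n a f f1 f2 \<gamma> lam y x =
     (1 / real n) * (\<Sum>i=1..n. ftilde a f f1 f2 y i x) + \<gamma> x + lam * (norm (x - y))\<^sup>2"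

end

theory Submission
  imports Defs
begin

text \<open>Pointwise, hypothesis (i) splits the numerator into the quadratic one plus the error
  \<open>E(x) = C\<^sub>i \<parallel>x - y\<parallel>\<^sup>3 / (6n)\<close>, and hypothesis (ii) enlarges the denominator, which can only
  decrease the positive part of the quadratic ratio. The error ratio \<open>E(x) / F\<^sub>\<lambda>\<^sub>,\<^sub>y(x)\<close> is
  bounded twice: by \<open>F\<^sub>\<lambda>\<^sub>,\<^sub>y(x) \<ge> \<lambda>\<parallel>x - y\<parallel>\<^sup>2\<close> (as \<open>F \<ge> 0\<close>), which cancels two powers of the
  distance, and by \<open>F\<^sub>\<lambda>\<^sub>,\<^sub>y(x) \<ge> \<alpha>\<close>. The supremum of the quadratic ratios is nonnegative
  (look at \<open>x = y\<close>), so taking the positive part costs nothing.\<close>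

lemma ratio_le_max_ratio_add:
  fixes P Pt E Fl Ft :: real
  assumes "P \<le> Pt + E" and "0 < Ft" and "Ft \<le> Fl"
  shows "P / Fl \<le> max 0 (Pt / Ft) + E / Fl"
proof -
  have Fl_pos: "0 < Fl" using assms by linarith
  have "P / Fl \<le> Pt / Fl + E / Fl"
    using assms(1) Fl_pos by (simp add: divide_right_mono add_divide_distrib[symmetric])
  moreover have "Pt / Fl \<le> max 0 (Pt / Ft)"
  proof (cases "0 \<le> Pt")
    case True
    then have "Pt / Fl \<le> Pt / Ft" using assms by (intro divide_left_mono) auto
    then show ?thesis by simp
  next
    case False
    then have "Pt / Fl \<le> 0" using Fl_pos by (simp add: divide_nonpos_pos)
    then show ?thesis by simp
  qed
  ultimately show ?thesis by linarith
qed

lemma cubic_over_denominator_le_min: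
  fixes c t r lam \<alpha> F :: real
  assumes "0 \<le> c" "0 \<le> t" "t \<le> r" "0 < lam" "0 < \<alpha>"
    and "lam * t\<^sup>2 \<le> F" and "\<alpha> \<le> F"
  shows "c * t ^ 3 / F \<le> min (c * r / lam) (c * r ^ 3 / \<alpha>)"
proof -
  have E_nonneg: "0 \<le> c * t ^ 3" using assms by simp
  have "c * t ^ 3 / F \<le> c * t ^ 3 / \<alpha>"
    using E_nonneg assms by (intro divide_left_mono) auto
  also have "\<dots> \<le> c * r ^ 3 / \<alpha>"
    using assms by (intro divide_right_mono mult_left_mono power_mono) auto
  finally have by_alpha: "c * t ^ 3 / F \<le> c * r ^ 3 / \<alpha>" .
  have by_lam: "c * t ^ 3 / F \<le> c * r / lam"
  proof (cases "t = 0")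
    case True
    then show ?thesis using assms by simp
  next
    case False
    then have t_pos: "0 < t" using assms by simp
    have "c * t ^ 3 / F \<le> c * t ^ 3 / (lam * t\<^sup>2)"
      using E_nonneg assms t_pos by (intro divide_left_mono) auto
    also have "\<dots> = c * t / lam"
      using t_pos by (simp add: power2_eq_square power3_eq_cube)
    also have "\<dots> \<le> c * r / lam"
      using assms by (intro divide_right_mono mult_left_mono) auto
    finally show ?thesis .
  qed
  from by_alpha by_lam show ?thesis by simp
qed

lemma SUP_ereal_le_SUP_max_add:
  fixes g h :: "'a \<Rightarrow> real" and m :: real
  assumes "x0 \<in> A" and "0 \<le> h x0"
    and "\<And>x. x \<in> A \<Longrightarrow> g x \<le> max 0 (h x) + m"
  shows "(SUP x\<in>A. ereal (g x)) \<le> (SUP x\<in>A. ereal (h x)) + ereal m"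
proof (rule SUP_least)
  fix x assume x: "x \<in> A"
  have "ereal 0 \<le> ereal (h x0)" using assms(2) by simp
  also have "\<dots> \<le> (SUP x\<in>A. ereal (h x))" using assms(1) by (rule SUP_upper)
  finally have "ereal 0 \<le> (SUP x\<in>A. ereal (h x))" .
  moreover have "ereal (h x) \<le> (SUP x\<in>A. ereal (h x))" using x by (rule SUP_upper)
  ultimately have "ereal (max 0 (h x)) \<le> (SUP x\<in>A. ereal (h x))"
    by (cases "0 \<le> h x") (simp_all add: max_def)
  then have "ereal (max 0 (h x)) + ereal m \<le> (SUP x\<in>A. ereal (h x)) + ereal m"
    by (rule add_right_mono)
  moreover have "ereal (g x) \<le> ereal (max 0 (h x)) + ereal m" using assms(3)[OF x] by (simp only: plus_ereal.simps ereal_less_eq)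
  ultimately show "ereal (g x) \<le> (SUP x\<in>A. ereal (h x)) + ereal m" by (rule order_trans[rotated])
qed

lemma objF_nonneg:
  assumes "\<And>i t. i \<in> {1..n} \<Longrightarrow> 0 \<le> f i t" and "\<And>x. 0 \<le> \<gamma> x"
  shows "0 \<le> objF n a f \<gamma> x"
  unfolding objF_def using assms by (intro add_nonneg_nonneg mult_nonneg_nonneg sum_nonneg) auto

lemma Flam_ge_proximal_term:
  assumes "\<And>i t. i \<in> {1..n} \<Longrightarrow> 0 \<le> f i t" and "\<And>x. 0 \<le> \<gamma> x"
  shows "lam * (norm (x - y))\<^sup>2 \<le> Flam n a f \<gamma> lam y x"
  using objF_nonneg[OF assms] by (simp add: Flam_def)

lemma ftilde_at_center: "ftilde a f f1 f2 y i y = f i (a i \<bullet> y)"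
  by (simp add: ftilde_def)

theorem theorem3:
  fixes n :: nat and a :: "nat \<Rightarrow> real^'d" and f f1 f2 :: "nat \<Rightarrow> real \<Rightarrow> real"
    and \<gamma> :: "real^'d \<Rightarrow> real" and lam r \<alpha> :: real and y :: "real^'d" and C :: "nat \<Rightarrow> real"
  assumes f_nonneg: "\<And>i t. i \<in> {1..n} \<Longrightarrow> f i t \<ge> 0"
    and f_deriv1: "\<And>i t. i \<in> {1..n} \<Longrightarrow> (f i has_real_derivative f1 i t) (at t)"
    and f_deriv2: "\<And>i t. i \<in> {1..n} \<Longrightarrow> (f1 i has_real_derivative f2 i t) (at t)"
    and \<gamma>_nonneg: "\<And>x. \<gamma> x \<ge> 0"
    and lam_pos: "lam > 0" and r_pos: "r > 0"
    and C_nonneg: "\<And>i. i \<in> {1..n} \<Longrightarrow> C i \<ge> 0"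
    and hyp_i: "\<And>i x. i \<in> {1..n} \<Longrightarrow> x \<in> cball y r \<Longrightarrow>
                   f i (a i \<bullet> x) - ftilde a f f1 f2 y i x \<le> C i / 6 * (norm (x - y)) ^ 3"
    and hyp_ii: "\<And>x. x \<in> cball y r \<Longrightarrow> Flam n a f \<gamma> lam y x \<ge> Ftilde n a f f1 f2 \<gamma> lam y x"
    and hyp_iii: "\<And>x. x \<in> cball y r \<Longrightarrow> Ftilde n a f f1 f2 \<gamma> lam y x > 0"
    and \<alpha>_min: "\<exists>x0\<in>cball y r. Flam n a f \<gamma> lam y x0 = \<alpha>"
    and \<alpha>_lower: "\<And>x. x \<in> cball y r \<Longrightarrow> \<alpha> \<le> Flam n a f \<gamma> lam y x"
    and \<alpha>_pos: "\<alpha> > 0"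
    and i: "i \<in> {1..n}"
  shows "(SUP x\<in>cball y r. ereal ((1 / real n) * f i (a i \<bullet> x) / Flam n a f \<gamma> lam y x))
         \<le> (SUP x\<in>cball y r. ereal ((1 / real n) * ftilde a f f1 f2 y i x / Ftilde n a f f1 f2 \<gamma> lam y x))
            + ereal (min (C i * r / (6 * real n * lam)) (C i * r ^ 3 / (6 * real n * \<alpha>)))"
proof (rule SUP_ereal_le_SUP_max_add)
  have n_pos: "0 < real n" using i by auto
  define c where "c = C i / (6 * real n)"
  have c_nonneg: "0 \<le> c" using C_nonneg[OF i] n_pos by (simp add: c_def)
  show y_in: "y \<in> cball y r" using r_pos by simp
  show "0 \<le> (1 / real n) * ftilde a f f1 f2 y i y / Ftilde n a f f1 f2 \<gamma> lam y y"
    unfolding ftilde_at_center using f_nonneg[OF i] hyp_iii[OF y_in] n_pos by simp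
  fix x assume x: "x \<in> cball y r"
  have "(1 / real n) * f i (a i \<bullet> x) \<le> (1 / real n) * (ftilde a f f1 f2 y i x + C i / 6 * norm (x - y) ^ 3)"
    using hyp_i[OF i x] n_pos by (intro mult_left_mono) auto
  also have "\<dots> = (1 / real n) * ftilde a f f1 f2 y i x + c * norm (x - y) ^ 3"
    by (simp add: c_def algebra_simps)
  finally have "(1 / real n) * f i (a i \<bullet> x) / Flam n a f \<gamma> lam y x
      \<le> max 0 ((1 / real n) * ftilde a f f1 f2 y i x / Ftilde n a f f1 f2 \<gamma> lam y x)
        + c * norm (x - y) ^ 3 / Flam n a f \<gamma> lam y x"
    using hyp_iii[OF x] hyp_ii[OF x] by (rule ratio_le_max_ratio_add)
  moreover have "c * norm (x - y) ^ 3 / Flam n a f \<gamma> lam y x \<le> min (c * r / lam) (c * r ^ 3 / \<alpha>)"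
    using x c_nonneg lam_pos \<alpha>_pos \<alpha>_lower[OF x] Flam_ge_proximal_term[OF f_nonneg \<gamma>_nonneg]
    by (intro cubic_over_denominator_le_min) (auto simp: dist_norm norm_minus_commute)
  moreover have "min (c * r / lam) (c * r ^ 3 / \<alpha>)
      = min (C i * r / (6 * real n * lam)) (C i * r ^ 3 / (6 * real n * \<alpha>))"
    by (simp add: c_def)
  ultimately show "(1 / real n) * f i (a i \<bullet> x) / Flam n a f \<gamma> lam y x
      \<le> max 0 ((1 / real n) * ftilde a f f1 f2 y i x / Ftilde n a f f1 f2 \<gamma> lam y x)
        + min (C i * r / (6 * real n * lam)) (C i * r ^ 3 / (6 * real n * \<alpha>))"
    by linarith
qed

end
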